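(* Let $\Box$ be an axis-parallel square of side length $1/2$ in $\mathbb{R}^2$, let $l$ be the line containing its top edge, and let $H$ be the open halfplane above $l$. Let $A$ be a finite set of points in $\Box$, and let $\xi(A)$ be the boundary of the closure of $H\setminus\bigcup_{a\in A}\odot_a$. Then $\xi(A)$ is an $x$-monotone curve whose leftmost and rightmost pieces are horizontal rays and each other piece is a portion of the boundary circle of $\odot_a$ for some $a\in A$ (said to be contributed by $a$), and: (1) if $\sigma,\sigma'$ are pieces of $\xi(A)$ contributed by $a$ and $a'$ respectively, then $\sigma$ lies to the left of $\sigma'$ on $\xi(A)$ iff $a$ lies to the left of $a'$; (2) for each $a\in A$ at most one piece of $\xi(A)$ is contributed by $a$, so $\xi(A)$ has $O(|A|)$ pieces.
   Context: $\odot_a$ denotes the closed disk of radius 1 centered at $a$. A piece is a maximal portion of the curve lying on a single circle (or ray). *)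

theory Defs
  imports "HOL-Analysis.Analysis"
begin

text \<open>Points of the plane are pairs of reals; the product metric on real \<times> real
  is the Euclidean one, so cball a 1 is the closed unit disk centred at a.\<close>

definition square :: "real \<Rightarrow> real \<Rightarrow> (real \<times> real) set" where
  "square x0 y0 = {x0..x0 + 1/2} \<times> {y0..y0 + 1/2}"

definition halfplane_above :: "real \<Rightarrow> (real \<times> real) set" where
  "halfplane_above y0 = {p. snd p > y0 + 1/2}"

definition xi :: "real \<Rightarrow> (real \<times> real) set \<Rightarrow> (real \<times> real) set" where
  "xi y0 A = frontier (closure (halfplane_above y0 - (\<Union>a\<in>A. cball a 1)))"

text \<open>A decomposition of the graph of f (an x-monotone curve) into maximal pieces:
  breakpoints t 0 < t 1 < ... < t n; the leftmost piece (x \<le> t 0) and the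
  rightmost piece (x \<ge> t n) are horizontal rays on the line y = y0 + 1/2;
  for i < n, the piece over [t i, t (i+1)] lies on the boundary circle of the
  disk centred at c i \<in> A (contributed by c i).  Maximality: consecutive pieces lie
  on different circles (and n \<ge> 1, so the two rays are separated).\<close>
definition piece_decomp ::
  "real \<Rightarrow> (real \<times> real) set \<Rightarrow> (real \<Rightarrow> real) \<Rightarrow> nat \<Rightarrow> (nat \<Rightarrow> real) \<Rightarrow> (nat \<Rightarrow> real \<times> real) \<Rightarrow> bool"
where
  "piece_decomp y0 A f n t c \<longleftrightarrow>
     n \<ge> 1 \<and>
     (\<forall>i<n. t i < t (Suc i)) \<and>
     (\<forall>x. x \<le> t 0 \<longrightarrow> f x = y0 + 1/2) \<and>
     (\<forall>x. x \<ge> t n \<longrightarrow> f x = y0 + 1/2) \<and>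
     (\<forall>i<n. c i \<in> A \<and> (\<forall>x\<in>{t i..t (Suc i)}. (x, f x) \<in> sphere (c i) 1)) \<and>
     (\<forall>i. Suc i < n \<longrightarrow> c i \<noteq> c (Suc i))"

end

theory Submission
  imports Defs
begin

text \<open>Above the line l, a unit disk whose centre lies below l is the region under its upper
  semicircle, so the closure of H minus the disks is the epigraph of the upper envelope of
  these semicircles and of the constant l, and xi(A) is the graph of that envelope.
  For centres with abscissae b < a the difference of the two semicircles is strictly
  increasing where both are defined. Hence two semicircles cross at most once above l, and
  wherever the envelope passes from the arc of one centre to the arc of another, the first
  centre lies to the left of the second. So the centres contributing the pieces of xi(A)
  appear in strictly increasing order of abscissa, and none contributes twice.\<close>

section \<open>Upper unit semicircles\<close>

lemma DERIV_sqrt_one_minus_square_shift: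
  fixes c z :: real
  assumes "\<bar>z - c\<bar> < 1"
  shows "((\<lambda>z. sqrt (1 - (z - c)\<^sup>2)) has_real_derivative - ((z - c) / sqrt (1 - (z - c)\<^sup>2))) (at z)"
proof -
  have pos: "0 < 1 - (z - c)\<^sup>2"
    using assms by (simp add: abs_square_less_1)
  have "((\<lambda>z. 1 - (z - c)\<^sup>2) has_real_derivative - (2 * (z - c))) (at z)"
    by (auto intro!: derivative_eq_intros)
  from DERIV_chain2[OF DERIV_real_sqrt[OF pos] this] show ?thesis
    by (rule DERIV_cong) (use pos in \<open>simp add: field_simps\<close>)
qed

lemma divide_sqrt_one_minus_square_less:
  fixes s t :: real
  assumes "s < t" "\<bar>s\<bar> < 1" "\<bar>t\<bar> < 1"
  shows "s / sqrt (1 - s\<^sup>2) < t / sqrt (1 - t\<^sup>2)"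
proof -
  have nonneg: "u / sqrt (1 - u\<^sup>2) < v / sqrt (1 - v\<^sup>2)" if "0 \<le> u" "u < v" "v < 1" for u v :: real
  proof (rule frac_less)
    show "0 < sqrt (1 - v\<^sup>2)"
      using that by (simp add: abs_square_less_1)
    show "sqrt (1 - v\<^sup>2) \<le> sqrt (1 - u\<^sup>2)"
      using that by (simp add: power_mono)
  qed (use that in auto)
  consider "0 \<le> s" | "s < 0" "0 \<le> t" | "t < 0"
    by linarith
  then show ?thesis
  proof cases
    case 1
    then show ?thesis using nonneg assms by auto
  next
    case 2
    have "s / sqrt (1 - s\<^sup>2) < 0"
      using 2 assms by (simp add: divide_neg_pos abs_square_less_1)
    also have "0 \<le> t / sqrt (1 - t\<^sup>2)"
      using 2 assms by (simp add: abs_square_le_1)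
    finally show ?thesis .
  next
    case 3
    then show ?thesis
      using nonneg[of "- t" "- s"] assms by auto
  qed
qed

lemma sqrt_one_minus_square_diff_strict_mono:
  fixes a b p q :: real
  assumes "b < a" "p < q" and near: "\<forall>z\<in>{p..q}. \<bar>z - a\<bar> < 1 \<and> \<bar>z - b\<bar> < 1"
  shows "sqrt (1 - (p - a)\<^sup>2) - sqrt (1 - (p - b)\<^sup>2) < sqrt (1 - (q - a)\<^sup>2) - sqrt (1 - (q - b)\<^sup>2)"
proof (rule DERIV_pos_imp_increasing[OF \<open>p < q\<close>])
  fix z assume "p \<le> z" "z \<le> q"
  then have za: "\<bar>z - a\<bar> < 1" and zb: "\<bar>z - b\<bar> < 1"
    using near by auto
  have "(z - a) / sqrt (1 - (z - a)\<^sup>2) < (z - b) / sqrt (1 - (z - b)\<^sup>2)"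
    using divide_sqrt_one_minus_square_less za zb \<open>b < a\<close> by simp
  then have "0 < - ((z - a) / sqrt (1 - (z - a)\<^sup>2)) - - ((z - b) / sqrt (1 - (z - b)\<^sup>2))"
    by simp
  with DERIV_diff[OF DERIV_sqrt_one_minus_square_shift[OF za] DERIV_sqrt_one_minus_square_shift[OF zb]]
  show "\<exists>y. ((\<lambda>z. sqrt (1 - (z - a)\<^sup>2) - sqrt (1 - (z - b)\<^sup>2)) has_real_derivative y) (at z) \<and> 0 < y"
    by blast
qed

text \<open>Outside the strip |x - fst a| \<le> 1 the arc is continued by the constant snd a,
  which keeps it continuous on all of the real line.\<close>
definition upper_arc :: "real \<times> real \<Rightarrow> real \<Rightarrow> real" where
  "upper_arc a x = snd a + sqrt (max 0 (1 - (x - fst a)\<^sup>2))"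

lemma upper_arc_eq:
  "\<bar>x - fst a\<bar> \<le> 1 \<Longrightarrow> upper_arc a x = snd a + sqrt (1 - (x - fst a)\<^sup>2)"
  by (simp add: upper_arc_def abs_square_le_1)

lemma continuous_on_upper_arc: "continuous_on S (upper_arc a)"
  unfolding upper_arc_def by (intro continuous_intros)

lemma upper_arc_diff_strict_mono:
  assumes "fst b < fst a" "p < q" "\<forall>z\<in>{p..q}. \<bar>z - fst a\<bar> < 1 \<and> \<bar>z - fst b\<bar> < 1"
  shows "upper_arc a p - upper_arc b p < upper_arc a q - upper_arc b q"
proof -
  have "upper_arc a z - upper_arc b z
      = snd a - snd b + (sqrt (1 - (z - fst a)\<^sup>2) - sqrt (1 - (z - fst b)\<^sup>2))"
    if "z \<in> {p..q}" for z
  proof -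
    have "\<bar>z - fst a\<bar> \<le> 1" "\<bar>z - fst b\<bar> \<le> 1"
      using assms(3)[rule_format, OF that] by auto
    then show ?thesis
      by (simp add: upper_arc_eq)
  qed
  then show ?thesis
    using sqrt_one_minus_square_diff_strict_mono[OF assms] \<open>p < q\<close> by simp
qed

text \<open>For equal abscissae the two arcs differ by a constant, and for fst b < fst a
  their difference would be strictly increasing.\<close>
lemma upper_arc_crossing_order:
  assumes "a \<noteq> b" "p < q" "\<bar>p - fst a\<bar> < 1" "\<bar>q - fst b\<bar> < 1"
    and "upper_arc b p \<le> upper_arc a p" "upper_arc a q \<le> upper_arc b q"
  shows "fst a < fst b"
proof (rule ccontr)
  assume "\<not> fst a < fst b"
  then consider "fst a = fst b" | "fst b < fst a"
    by linarith
  then show False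
  proof cases
    case 1
    then have "upper_arc a x - upper_arc b x = snd a - snd b" for x
      by (simp add: upper_arc_def)
    from this[of p] this[of q] have "snd a = snd b"
      using assms(5,6) by linarith
    then show False
      using 1 \<open>a \<noteq> b\<close> by (simp add: prod_eq_iff)
  next
    case 2
    then have "\<forall>z\<in>{p..q}. \<bar>z - fst a\<bar> < 1 \<and> \<bar>z - fst b\<bar> < 1"
      using assms(3,4) by (auto simp: abs_less_iff)
    from upper_arc_diff_strict_mono[OF 2 \<open>p < q\<close> this] assms(5,6) show False
      by simp
  qed
qed

lemma mem_cball_iff_le_upper_arc:
  assumes "snd a < y"
  shows "(x, y) \<in> cball a 1 \<longleftrightarrow> y \<le> upper_arc a x"
proof -
  have "(x, y) \<in> cball a 1 \<longleftrightarrow> (x - fst a)\<^sup>2 + (y - snd a)\<^sup>2 \<le> 1"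
    by (simp add: dist_prod_def dist_real_def power2_commute)
  also have "\<dots> \<longleftrightarrow> (y - snd a)\<^sup>2 \<le> max 0 (1 - (x - fst a)\<^sup>2)"
    using assms by (auto simp: le_max_iff_disj)
  also have "\<dots> \<longleftrightarrow> sqrt ((y - snd a)\<^sup>2) \<le> sqrt (max 0 (1 - (x - fst a)\<^sup>2))"
    by (rule real_sqrt_le_iff[symmetric])
  also have "\<dots> \<longleftrightarrow> y \<le> upper_arc a x"
    using assms by (auto simp: upper_arc_def)
  finally show ?thesis .
qed

lemma mem_sphere_iff_upper_arc:
  assumes "snd a \<le> y"
  shows "(x, y) \<in> sphere a 1 \<longleftrightarrow> \<bar>x - fst a\<bar> \<le> 1 \<and> y = upper_arc a x"
proof -
  have "(x, y) \<in> sphere a 1 \<longleftrightarrow> (x - fst a)\<^sup>2 + (y - snd a)\<^sup>2 = 1"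
    by (simp add: dist_prod_def dist_real_def power2_commute)
  also have "\<dots> \<longleftrightarrow> (x - fst a)\<^sup>2 \<le> 1 \<and> y - snd a = sqrt (1 - (x - fst a)\<^sup>2)"
  proof
    assume eq: "(x - fst a)\<^sup>2 + (y - snd a)\<^sup>2 = 1"
    then have "(y - snd a)\<^sup>2 = 1 - (x - fst a)\<^sup>2" "(x - fst a)\<^sup>2 \<le> 1"
      using zero_le_power2[of "y - snd a"] by linarith+
    with real_sqrt_unique[of "y - snd a"] assms
    show "(x - fst a)\<^sup>2 \<le> 1 \<and> y - snd a = sqrt (1 - (x - fst a)\<^sup>2)"
      by simp
  qed auto
  also have "\<dots> \<longleftrightarrow> \<bar>x - fst a\<bar> \<le> 1 \<and> y = upper_arc a x"
    by (auto simp: abs_square_le_1 upper_arc_eq)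
  finally show ?thesis .
qed

section \<open>Epigraphs\<close>

lemma continuous_on_Max_insert:
  fixes F :: "'a \<Rightarrow> 'b::topological_space \<Rightarrow> 'c::linorder_topology"
  assumes "finite A" "\<And>a. a \<in> A \<Longrightarrow> continuous_on S (F a)"
  shows "continuous_on S (\<lambda>x. Max (insert c ((\<lambda>a. F a x) ` A)))"
  using assms
proof (induction A rule: finite_induct)
  case (insert b A)
  have "Max (insert c ((\<lambda>a. F a x) ` insert b A)) = max (F b x) (Max (insert c ((\<lambda>a. F a x) ` A)))" for x
    using insert.hyps(1) by (simp add: insert_commute[of c])
  then show ?case
    using insert by (simp add: continuous_on_max)
qed simp

lemma closure_strict_epigraph:
  fixes f :: "real \<Rightarrow> real"
  assumes "continuous_on UNIV f"
  shows "closure {p. f (fst p) < snd p} = {p. f (fst p) \<le> snd p}"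
proof
  have "continuous_on UNIV (\<lambda>p::real \<times> real. f (fst p))"
    by (rule continuous_on_compose2[OF assms]) (auto intro: continuous_intros)
  then show "closure {p. f (fst p) < snd p} \<subseteq> {p. f (fst p) \<le> snd p}"
    by (intro closure_minimal closed_Collect_le) (auto intro: continuous_intros)
next
  show "{p. f (fst p) \<le> snd p} \<subseteq> closure {p. f (fst p) < snd p}"
  proof (clarsimp simp: closure_approachable)
    fix x y e :: real
    assume "f x \<le> y" "0 < e"
    then have "f x < y + e / 2" and "dist (x, y + e / 2) (x, y) < e"
      by (simp_all add: dist_Pair_Pair dist_real_def)
    then show "\<exists>a b. f a < b \<and> dist (a, b) (x, y) < e"
      by blast
  qed
qed

lemma interior_epigraph:
  fixes f :: "real \<Rightarrow> real"
  assumes "continuous_on UNIV f"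
  shows "interior {p. f (fst p) \<le> snd p} = {p. f (fst p) < snd p}"
proof
  have "continuous_on UNIV (\<lambda>p::real \<times> real. f (fst p))"
    by (rule continuous_on_compose2[OF assms]) (auto intro: continuous_intros)
  then show "{p. f (fst p) < snd p} \<subseteq> interior {p. f (fst p) \<le> snd p}"
    by (intro interior_maximal open_Collect_less) (auto intro: continuous_intros)
next
  show "interior {p. f (fst p) \<le> snd p} \<subseteq> {p. f (fst p) < snd p}"
  proof (clarsimp simp: mem_interior)
    fix x y e :: real
    assume "0 < e" and ball: "ball (x, y) e \<subseteq> {p. f (fst p) \<le> snd p}"
    have "(x, y - e / 2) \<in> ball (x, y) e"
      using \<open>0 < e\<close> by (simp add: dist_Pair_Pair dist_real_def)
    then show "f x < y"
      using ball \<open>0 < e\<close> by force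
  qed
qed

lemma frontier_closure_strict_epigraph:
  fixes f :: "real \<Rightarrow> real"
  assumes "continuous_on UNIV f"
  shows "frontier (closure {p. f (fst p) < snd p}) = {(x, f x) | x. True}"
proof -
  have "frontier (closure {p. f (fst p) < snd p})
      = closure {p. f (fst p) < snd p} - interior (closure {p. f (fst p) < snd p})"
    by (simp add: frontier_def)
  also have "\<dots> = {p. f (fst p) \<le> snd p} - {p. f (fst p) < snd p}"
    by (simp add: closure_strict_epigraph interior_epigraph assms)
  also have "\<dots> = {(x, f x) | x. True}"
    by force
  finally show ?thesis .
qed

lemma finite_Collect_if_Uniq: "(\<exists>\<^sub>\<le>\<^sub>1x. P x) \<Longrightarrow> finite {x. P x}"
proof (cases "\<exists>x. P x")
  case True
  then obtain u where "P u"
    by blast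
  moreover assume "\<exists>\<^sub>\<le>\<^sub>1x. P x"
  ultimately have "{x. P x} \<subseteq> {u}"
    using Uniq_D[of P] by blast
  then show ?thesis
    using finite_subset by blast
qed simp

lemma finite_set_consecutive_enumeration:
  fixes B :: "'a::linorder set"
  assumes "finite B" "lo \<in> B" "hi \<in> B" "B \<subseteq> {lo..hi}"
  obtains n t where "\<forall>i<n. t i < t (Suc i)" "t 0 = lo" "t n = hi" "\<forall>i\<le>n. t i \<in> B"
    "\<forall>i<n. {t i<..<t (Suc i)} \<inter> B = {}"
proof -
  obtain xs where xs: "sorted_wrt (<) xs" "set xs = B"
    using ex1_sorted_list_for_set_if_finite[OF \<open>finite B\<close>] by blast
  define n where "n = length xs - 1"
  have len: "length xs = Suc n"
    using xs(2) \<open>lo \<in> B\<close> n_def by (cases xs) auto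
  have sorted: "sorted xs"
    using xs(1) strict_sorted_imp_sorted by blast
  have mono: "xs ! i \<le> xs ! j" if "i \<le> j" "j \<le> n" for i j
    using sorted_nth_mono[OF sorted] that len by simp
  have index: "\<exists>k\<le>n. xs ! k = x" if "x \<in> B" for x
    using that xs(2) len by (metis in_set_conv_nth less_Suc_eq_le)
  have inB: "xs ! k \<in> B" if "k \<le> n" for k
    using that xs(2) len by (metis le_imp_less_Suc nth_mem)
  show thesis
  proof (rule that)
    show "\<forall>i<n. xs ! i < xs ! Suc i"
      using sorted_wrt_nth_less[OF xs(1)] len by simp
    obtain k where "k \<le> n" "xs ! k = lo"
      using index \<open>lo \<in> B\<close> by blast
    then show "xs ! 0 = lo"
      using mono[of 0 k] inB[of 0] assms(4) by fastforce
    obtain k where "k \<le> n" "xs ! k = hi"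
      using index \<open>hi \<in> B\<close> by blast
    then show "xs ! n = hi"
      using mono[of k n] inB[of n] assms(4) by fastforce
    show "\<forall>i\<le>n. xs ! i \<in> B"
      using inB by blast
    show "\<forall>i<n. {xs ! i<..<xs ! Suc i} \<inter> B = {}"
    proof (intro allI impI equals0I)
      fix i x assume "i < n" "x \<in> {xs ! i<..<xs ! Suc i} \<inter> B"
      then obtain k where "k \<le> n" "xs ! k = x" "xs ! i < xs ! k" "xs ! k < xs ! Suc i"
        using index by auto
      then show False
        using mono[of k i] mono[of "Suc i" k] \<open>i < n\<close> by (cases "k \<le> i") auto
    qed
  qed
qed

section \<open>Decompositions into arcs\<close>

definition arc_decomp ::
  "real \<Rightarrow> (real \<times> real) set \<Rightarrow> (real \<Rightarrow> real) \<Rightarrow> nat \<Rightarrow> (nat \<Rightarrow> real) \<Rightarrow> (nat \<Rightarrow> real \<times> real) \<Rightarrow> bool"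
where
  "arc_decomp y0 A f n t c \<longleftrightarrow>
     n \<ge> 1 \<and>
     (\<forall>i<n. t i < t (Suc i)) \<and>
     (\<forall>x. x \<le> t 0 \<longrightarrow> f x = y0 + 1/2) \<and>
     (\<forall>x. x \<ge> t n \<longrightarrow> f x = y0 + 1/2) \<and>
     (\<forall>i<n. c i \<in> A \<and> (\<forall>x\<in>{t i..t (Suc i)}. (x, f x) \<in> sphere (c i) 1))"

lemma piece_decomp_iff_arc_decomp:
  "piece_decomp y0 A f n t c \<longleftrightarrow> arc_decomp y0 A f n t c \<and> (\<forall>i. Suc i < n \<longrightarrow> c i \<noteq> c (Suc i))"
  unfolding piece_decomp_def arc_decomp_def by blast

lemma arc_decomp_merge:
  assumes decomp: "arc_decomp y0 A f n t c" and "Suc i < n" and same: "c i = c (Suc i)"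
  shows "\<exists>t' c'. arc_decomp y0 A f (n - 1) t' c'"
proof -
  define skip where "skip j = (if j \<le> i then j else Suc j)" for j
  define t' where "t' j = t (skip j)" for j
  define c' where "c' j = c (skip j)" for j
  have t_mono: "\<And>j. j < n \<Longrightarrow> t j < t (Suc j)"
    and arcs: "\<And>j. j < n \<Longrightarrow> c j \<in> A \<and> (\<forall>x\<in>{t j..t (Suc j)}. (x, f x) \<in> sphere (c j) 1)"
    using decomp by (auto simp: arc_decomp_def)
  have "t' j < t' (Suc j)" if "j < n - 1" for j
    using that \<open>Suc i < n\<close> t_mono[of j] t_mono[of "Suc j"]
    by (cases j i rule: linorder_cases) (auto simp: t'_def skip_def)
  moreover have "c' j \<in> A \<and> (\<forall>x\<in>{t' j..t' (Suc j)}. (x, f x) \<in> sphere (c' j) 1)"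
    if "j < n - 1" for j
  proof (cases "j = i")
    case True
    have "{t i..t (Suc (Suc i))} \<subseteq> {t i..t (Suc i)} \<union> {t (Suc i)..t (Suc (Suc i))}"
      by auto
    then show ?thesis
      using True arcs[of i] arcs[of "Suc i"] \<open>Suc i < n\<close> same by (fastforce simp: t'_def c'_def skip_def)
  next
    case False
    then show ?thesis
      using that arcs[of j] arcs[of "Suc j"] by (auto simp: t'_def c'_def skip_def)
  qed
  moreover have "t' 0 = t 0" "t' (n - 1) = t n"
    using \<open>Suc i < n\<close> by (auto simp: t'_def skip_def)
  ultimately have "arc_decomp y0 A f (n - 1) t' c'"
    using decomp \<open>Suc i < n\<close> by (auto simp: arc_decomp_def)
  then show ?thesis
    by blast
qed

text \<open>A decomposition with the fewest pieces is maximal, since otherwise two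
  consecutive pieces on the same circle could be merged.\<close>
lemma piece_decomp_exists_if_arc_decomp:
  assumes "\<exists>n t c. arc_decomp y0 A f n t c"
  shows "\<exists>n t c. piece_decomp y0 A f n t c"
proof -
  define n where "n = (LEAST n. \<exists>t c. arc_decomp y0 A f n t c)"
  obtain t c where decomp: "arc_decomp y0 A f n t c"
    using LeastI_ex[of "\<lambda>n. \<exists>t c. arc_decomp y0 A f n t c"] assms n_def by blast
  have "c i \<noteq> c (Suc i)" if i: "Suc i < n" for i
  proof
    assume "c i = c (Suc i)"
    then obtain t' c' where "arc_decomp y0 A f (n - 1) t' c'"
      using arc_decomp_merge[OF decomp i] by blast
    moreover have "n - 1 < n"
      using i by simp
    ultimately show False
      using not_less_Least n_def by blast
  qed
  then show ?thesis
    using decomp by (auto simp: piece_decomp_iff_arc_decomp)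
qed

section \<open>The upper envelope of the disks\<close>

locale unit_disks_in_square =
  fixes x0 y0 :: real and A :: "(real \<times> real) set"
  assumes finite_centres: "finite A" and centres_nonempty: "A \<noteq> {}"
    and centres_in_square: "A \<subseteq> square x0 y0"
begin

abbreviation l :: real where "l \<equiv> y0 + 1/2"

lemma centre_bounds:
  "a \<in> A \<Longrightarrow> x0 \<le> fst a \<and> fst a \<le> x0 + 1/2 \<and> l - 1/2 \<le> snd a \<and> snd a \<le> l"
  using centres_in_square by (auto simp: square_def mem_Times_iff)

definition envelope :: "real \<Rightarrow> real" where
  "envelope x = Max (insert l ((\<lambda>a. upper_arc a x) ` A))"

lemma l_le_envelope: "l \<le> envelope x"
  by (simp add: envelope_def finite_centres)

lemma upper_arc_le_envelope: "a \<in> A \<Longrightarrow> upper_arc a x \<le> envelope x"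
  by (simp add: envelope_def finite_centres)

lemma envelope_less_iff: "envelope x < y \<longleftrightarrow> l < y \<and> (\<forall>a\<in>A. upper_arc a x < y)"
  by (simp add: envelope_def finite_centres)

lemma envelope_eq_upper_arc_if_gt: "l < envelope x \<Longrightarrow> \<exists>a\<in>A. envelope x = upper_arc a x"
  using Max_in[of "insert l ((\<lambda>a. upper_arc a x) ` A)"] finite_centres
  by (auto simp: envelope_def)

lemma continuous_on_envelope: "continuous_on UNIV envelope"
  unfolding envelope_def[abs_def]
  by (intro continuous_on_Max_insert finite_centres continuous_on_upper_arc)

lemma halfplane_minus_disks:
  "halfplane_above y0 - (\<Union>a\<in>A. cball a 1) = {p. envelope (fst p) < snd p}"
proof (intro set_eqI)
  fix p :: "real \<times> real"
  obtain x y where p: "p = (x, y)"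
    by fastforce
  have disk: "(x, y) \<in> cball a 1 \<longleftrightarrow> y \<le> upper_arc a x" if "a \<in> A" "l < y" for a
    using that centre_bounds[of a] by (intro mem_cball_iff_le_upper_arc) auto
  have "p \<in> halfplane_above y0 - (\<Union>a\<in>A. cball a 1) \<longleftrightarrow> l < y \<and> (\<forall>a\<in>A. (x, y) \<notin> cball a 1)"
    by (auto simp: p halfplane_above_def simp del: mem_cball)
  also have "\<dots> \<longleftrightarrow> l < y \<and> (\<forall>a\<in>A. upper_arc a x < y)"
    using disk by (auto simp: not_le simp del: mem_cball)
  finally show "p \<in> halfplane_above y0 - (\<Union>a\<in>A. cball a 1) \<longleftrightarrow> p \<in> {p. envelope (fst p) < snd p}"
    by (simp add: p envelope_less_iff)
qed

lemma xi_eq_graph_envelope: "xi y0 A = {(x, envelope x) | x. True}"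
  unfolding xi_def halfplane_minus_disks
  by (rule frontier_closure_strict_epigraph[OF continuous_on_envelope])

definition half_chord :: "real \<times> real \<Rightarrow> real" where
  "half_chord a = sqrt (1 - (l - snd a)\<^sup>2)"

lemma half_chord_gt: "a \<in> A \<Longrightarrow> 1/2 < half_chord a"
proof -
  assume "a \<in> A"
  then have "(l - snd a)\<^sup>2 \<le> (1/2)\<^sup>2"
    using centre_bounds[of a] by (intro power_mono) auto
  then show "1/2 < half_chord a"
    unfolding half_chord_def by (intro real_less_rsqrt) (simp add: power2_eq_square)
qed

lemma half_chord_le_1: "half_chord a \<le> 1"
  by (simp add: half_chord_def)

lemma l_less_upper_arc_iff:
  assumes "a \<in> A"
  shows "l < upper_arc a x \<longleftrightarrow> \<bar>x - fst a\<bar> < half_chord a"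
proof -
  have "0 \<le> l - snd a"
    using centre_bounds[OF assms] by simp
  then have "l < upper_arc a x \<longleftrightarrow> sqrt ((l - snd a)\<^sup>2) < sqrt (max 0 (1 - (x - fst a)\<^sup>2))"
    by (simp add: upper_arc_def algebra_simps)
  also have "\<dots> \<longleftrightarrow> (l - snd a)\<^sup>2 < 1 - (x - fst a)\<^sup>2"
    by (simp only: real_sqrt_less_iff) (auto simp: less_max_iff_disj)
  also have "\<dots> \<longleftrightarrow> sqrt ((x - fst a)\<^sup>2) < sqrt (1 - (l - snd a)\<^sup>2)"
    by (simp only: real_sqrt_less_iff) linarith
  also have "\<dots> \<longleftrightarrow> \<bar>x - fst a\<bar> < half_chord a"
    by (simp add: half_chord_def)
  finally show ?thesis .
qed

lemma near_centre_if_l_less_upper_arc: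
  "a \<in> A \<Longrightarrow> l < upper_arc a x \<Longrightarrow> \<bar>x - fst a\<bar> < 1"
  using l_less_upper_arc_iff[of a x] half_chord_le_1[of a] by linarith

definition left_end :: real where
  "left_end = Min ((\<lambda>a. fst a - half_chord a) ` A)"

definition right_end :: real where
  "right_end = Max ((\<lambda>a. fst a + half_chord a) ` A)"

text \<open>The chord of each disk on l has half-length more than 1/2 while all centres lie
  in a strip of width 1/2, so the chords overlap and their union is an interval.\<close>
lemma l_less_envelope_iff: "l < envelope x \<longleftrightarrow> left_end < x \<and> x < right_end"
proof
  assume "l < envelope x"
  then obtain a where a: "a \<in> A" "l < upper_arc a x"
    using envelope_eq_upper_arc_if_gt by fastforce
  moreover have "left_end \<le> fst a - half_chord a" "fst a + half_chord a \<le> right_end"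
    using a finite_centres by (auto simp: left_end_def right_end_def)
  ultimately show "left_end < x \<and> x < right_end"
    using l_less_upper_arc_iff[OF a(1), of x] by (simp add: abs_less_iff)
next
  assume x: "left_end < x \<and> x < right_end"
  have "left_end \<in> (\<lambda>a. fst a - half_chord a) ` A"
    unfolding left_end_def using finite_centres centres_nonempty by (intro Min_in) auto
  moreover have "right_end \<in> (\<lambda>a. fst a + half_chord a) ` A"
    unfolding right_end_def using finite_centres centres_nonempty by (intro Max_in) auto
  ultimately obtain a b where a: "a \<in> A" "left_end = fst a - half_chord a"
    and b: "b \<in> A" "right_end = fst b + half_chord b"
    by blast
  have "\<bar>x - fst a\<bar> < half_chord a \<or> \<bar>x - fst b\<bar> < half_chord b"
  proof (cases "x \<le> x0 + 1/4")
    case True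
    then have "\<bar>x - fst a\<bar> < half_chord a"
      using x a centre_bounds[OF a(1)] half_chord_gt[OF a(1)] by (simp add: abs_less_iff)
    then show ?thesis ..
  next
    case False
    then have "\<bar>x - fst b\<bar> < half_chord b"
      using x b centre_bounds[OF b(1)] half_chord_gt[OF b(1)] by (simp add: abs_less_iff)
    then show ?thesis ..
  qed
  then obtain c where "c \<in> A" "l < upper_arc c x"
    using a(1) b(1) l_less_upper_arc_iff by blast
  then show "l < envelope x"
    using upper_arc_le_envelope order_less_le_trans by blast
qed

lemma left_end_less_right_end: "left_end < right_end"
proof -
  obtain a where a: "a \<in> A"
    using centres_nonempty by blast
  then have "left_end \<le> fst a - half_chord a" "fst a + half_chord a \<le> right_end"
    using finite_centres by (auto simp: left_end_def right_end_def)
  then show ?thesis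
    using half_chord_gt[OF a] by linarith
qed

lemma upper_arcs_cross_at_most_once:
  assumes a: "a \<in> A" and b: "b \<in> A" and "a \<noteq> b"
  shows "\<exists>\<^sub>\<le>\<^sub>1x. upper_arc a x = upper_arc b x \<and> l < upper_arc a x"
proof (rule Uniq_I, rule ccontr)
  fix u v
  assume "upper_arc a u = upper_arc b u \<and> l < upper_arc a u"
    and "upper_arc a v = upper_arc b v \<and> l < upper_arc a v" and "v \<noteq> u"
  then have cross: "upper_arc a z = upper_arc b z" "\<bar>z - fst a\<bar> < 1" "\<bar>z - fst b\<bar> < 1"
    if "z \<in> {u, v}" for z
    using that near_centre_if_l_less_upper_arc[OF a] near_centre_if_l_less_upper_arc[OF b] by auto
  have False if "p < q" "p \<in> {u, v}" "q \<in> {u, v}" for p q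
  proof -
    note p = cross[OF that(2)] and q = cross[OF that(3)]
    have "fst a < fst b"
      by (rule upper_arc_crossing_order[OF \<open>a \<noteq> b\<close> \<open>p < q\<close>]) (use p q in simp_all)
    moreover have "fst b < fst a"
      by (rule upper_arc_crossing_order[OF \<open>a \<noteq> b\<close>[symmetric] \<open>p < q\<close>]) (use p q in simp_all)
    ultimately show False
      by simp
  qed
  then show False
    using \<open>v \<noteq> u\<close> by (cases u v rule: linorder_cases) auto
qed

definition crossings :: "real set" where
  "crossings = (\<Union>a\<in>A. \<Union>b\<in>A - {a}. {x. upper_arc a x = upper_arc b x \<and> l < upper_arc a x})"

lemma finite_crossings: "finite crossings"
  unfolding crossings_def
proof (intro finite_UN_I finite_Diff finite_centres finite_Collect_if_Uniq)
  fix a b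
  assume "a \<in> A" "b \<in> A - {a}"
  then show "\<exists>\<^sub>\<le>\<^sub>1x. upper_arc a x = upper_arc b x \<and> l < upper_arc a x"
    by (intro upper_arcs_cross_at_most_once) auto
qed

lemma upper_arc_less_active_arc:
  assumes "x \<notin> crossings" "a \<in> A" "envelope x = upper_arc a x" "l < envelope x"
    and "b \<in> A" "b \<noteq> a"
  shows "upper_arc b x < upper_arc a x"
proof -
  have "upper_arc b x \<le> upper_arc a x"
    using upper_arc_le_envelope[OF assms(5), of x] assms(3) by simp
  moreover have "upper_arc b x \<noteq> upper_arc a x"
    using assms unfolding crossings_def by force
  ultimately show ?thesis
    by simp
qed

text \<open>Off the crossings, the set where the envelope follows the arc of a is both
  closed and relatively open in an interval above l, so by connectedness it is everything.\<close>
lemma envelope_follows_one_arc: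
  assumes "u < v" and above: "\<And>x. x \<in> {u<..<v} \<Longrightarrow> l < envelope x"
    and no_crossing: "{u<..<v} \<inter> crossings = {}"
  obtains a where "a \<in> A" "\<And>x. x \<in> {u<..<v} \<Longrightarrow> envelope x = upper_arc a x"
proof -
  define G where "G = {u<..<v}"
  define m where "m = (u + v) / 2"
  have "m \<in> G"
    using \<open>u < v\<close> by (simp add: G_def m_def)
  then obtain a where a: "a \<in> A" "envelope m = upper_arc a m"
    using envelope_eq_upper_arc_if_gt above G_def by blast
  define C where "C = {x. envelope x = upper_arc a x}"
  define D where "D = (\<Inter>b\<in>A - {a}. {x. upper_arc b x < upper_arc a x})"
  have "G \<inter> C = G \<inter> D"
  proof (intro set_eqI iffI)
    fix x
    assume x: "x \<in> G \<inter> C"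
    have "x \<notin> crossings" "l < envelope x"
      using x no_crossing above by (auto simp: G_def)
    moreover have "envelope x = upper_arc a x"
      using x by (simp add: C_def)
    ultimately have "upper_arc b x < upper_arc a x" if "b \<in> A" "b \<noteq> a" for b
      using upper_arc_less_active_arc a(1) that by blast
    with x show "x \<in> G \<inter> D"
      by (auto simp: D_def)
  next
    fix x
    assume x: "x \<in> G \<inter> D"
    then obtain b where b: "b \<in> A" "envelope x = upper_arc b x"
      using envelope_eq_upper_arc_if_gt above G_def by blast
    have "b = a"
    proof (rule ccontr)
      assume "b \<noteq> a"
      then have "upper_arc b x < upper_arc a x"
        using x b(1) by (simp add: D_def)
      then show False
        using b(2) upper_arc_le_envelope[OF a(1), of x] by simp
    qed
    then show "x \<in> G \<inter> C"
      using x b by (simp add: C_def)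
  qed
  moreover have "open D"
    unfolding D_def using finite_centres
    by (intro open_INT finite_Diff ballI open_Collect_less continuous_on_upper_arc)
  ultimately have "openin (top_of_set G) (G \<inter> C)"
    by (simp add: openin_open_Int)
  moreover have "closedin (top_of_set G) (G \<inter> C)"
    unfolding C_def
    by (intro closedin_closed_Int closed_Collect_eq continuous_on_envelope continuous_on_upper_arc)
  moreover have "m \<in> G \<inter> C"
    using \<open>m \<in> G\<close> a by (simp add: C_def)
  moreover have "connected G"
    by (simp add: G_def)
  ultimately have "G \<inter> C = G"
    unfolding connected_clopen by blast
  then have "G \<subseteq> C"
    by blast
  then show thesis
    using that[OF a(1)] by (force simp: G_def C_def)
qed

lemma envelope_on_one_circle:
  assumes "u < v" and inside: "{u<..<v} \<subseteq> {left_end<..<right_end}"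
    and no_crossing: "{u<..<v} \<inter> crossings = {}"
  obtains a where "a \<in> A" "\<forall>x\<in>{u..v}. (x, envelope x) \<in> sphere a 1"
proof -
  have above: "l < envelope x" if "x \<in> {u<..<v}" for x
    using that inside l_less_envelope_iff by auto
  obtain a where a: "a \<in> A" and on_arc: "\<And>x. x \<in> {u<..<v} \<Longrightarrow> envelope x = upper_arc a x"
    using envelope_follows_one_arc[OF \<open>u < v\<close> above no_crossing] by blast
  have closure: "closure {u<..<v} = {u..v}"
    using \<open>u < v\<close> by simp
  have "{u<..<v} \<subseteq> {x. envelope x = upper_arc a x}"
    using on_arc by blast
  then have "{u..v} \<subseteq> {x. envelope x = upper_arc a x}"
    unfolding closure[symmetric]
    by (intro closure_minimal closed_Collect_eq continuous_on_envelope continuous_on_upper_arc)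
  moreover have "{u<..<v} \<subseteq> cball (fst a) 1"
    using on_arc above near_centre_if_l_less_upper_arc[OF a]
    by (force simp: dist_real_def abs_minus_commute)
  then have "{u..v} \<subseteq> cball (fst a) 1"
    unfolding closure[symmetric] by (intro closure_minimal closed_cball)
  moreover have "snd a \<le> envelope x" for x
    using centre_bounds[OF a] l_le_envelope[of x] by linarith
  ultimately have "\<forall>x\<in>{u..v}. (x, envelope x) \<in> sphere a 1"
    by (subst mem_sphere_iff_upper_arc) (auto simp: dist_real_def abs_minus_commute)
  with a show thesis
    using that by blast
qed

lemma arc_decomp_envelope: "\<exists>n t c. arc_decomp y0 A envelope n t c"
proof -
  define B where "B = {left_end, right_end} \<union> (crossings \<inter> {left_end<..<right_end})"
  have B_bounds: "B \<subseteq> {left_end..right_end}"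
    using left_end_less_right_end by (auto simp: B_def)
  obtain n t where t_mono: "\<forall>i<n. t i < t (Suc i)" and t0: "t 0 = left_end"
    and tn: "t n = right_end" and t_in_B: "\<forall>i\<le>n. t i \<in> B"
    and gaps: "\<forall>i<n. {t i<..<t (Suc i)} \<inter> B = {}"
    by (rule finite_set_consecutive_enumeration[of B left_end right_end])
      (use finite_crossings B_bounds in \<open>auto simp: B_def\<close>)
  have "n \<ge> 1"
    using t0 tn left_end_less_right_end by (cases n) auto
  have "\<forall>i\<in>{..<n}. \<exists>a. a \<in> A \<and> (\<forall>x\<in>{t i..t (Suc i)}. (x, envelope x) \<in> sphere a 1)"
  proof
    fix i
    assume "i \<in> {..<n}"
    then have "i < n"
      by simp
    have "t i \<in> B" "t (Suc i) \<in> B"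
      using t_in_B \<open>i < n\<close> by auto
    then have inside: "{t i<..<t (Suc i)} \<subseteq> {left_end<..<right_end}"
      using B_bounds by fastforce
    moreover have "{t i<..<t (Suc i)} \<inter> crossings = {}"
      using gaps \<open>i < n\<close> inside by (auto simp: B_def)
    moreover have "t i < t (Suc i)"
      using t_mono \<open>i < n\<close> by simp
    ultimately obtain a where "a \<in> A" "\<forall>x\<in>{t i..t (Suc i)}. (x, envelope x) \<in> sphere a 1"
      using envelope_on_one_circle by blast
    then show "\<exists>a. a \<in> A \<and> (\<forall>x\<in>{t i..t (Suc i)}. (x, envelope x) \<in> sphere a 1)"
      by blast
  qed
  from bchoice[OF this] obtain c
    where "\<forall>i\<in>{..<n}. c i \<in> A \<and> (\<forall>x\<in>{t i..t (Suc i)}. (x, envelope x) \<in> sphere (c i) 1)"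
    by blast
  moreover have "envelope x = l" if "x \<le> left_end \<or> right_end \<le> x" for x
    using that l_less_envelope_iff[of x] l_le_envelope[of x] by linarith
  ultimately have "arc_decomp y0 A envelope n t c"
    using \<open>n \<ge> 1\<close> t_mono t0 tn by (auto simp: arc_decomp_def)
  then show ?thesis
    by blast
qed

lemma piece_on_upper_arc:
  assumes decomp: "piece_decomp y0 A envelope n t c" and "i < n"
  shows "c i \<in> A" and "\<forall>x\<in>{t i..t (Suc i)}. envelope x = upper_arc (c i) x"
    and "\<forall>x\<in>{t i<..<t (Suc i)}. \<bar>x - fst (c i)\<bar> < 1"
proof -
  have ci: "c i \<in> A" and on_circle: "\<forall>x\<in>{t i..t (Suc i)}. (x, envelope x) \<in> sphere (c i) 1"
    and "t i < t (Suc i)"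
    using assms by (auto simp: piece_decomp_def)
  have "snd (c i) \<le> envelope x" for x
    using centre_bounds[OF ci] l_le_envelope[of x] by linarith
  then have on_arc: "\<bar>x - fst (c i)\<bar> \<le> 1 \<and> envelope x = upper_arc (c i) x"
    if "x \<in> {t i..t (Suc i)}" for x
    using on_circle that mem_sphere_iff_upper_arc by blast
  show "c i \<in> A"
    by (rule ci)
  show "\<forall>x\<in>{t i..t (Suc i)}. envelope x = upper_arc (c i) x"
    using on_arc by blast
  have "\<bar>t i - fst (c i)\<bar> \<le> 1" "\<bar>t (Suc i) - fst (c i)\<bar> \<le> 1"
    using on_arc \<open>t i < t (Suc i)\<close> by auto
  then show "\<forall>x\<in>{t i<..<t (Suc i)}. \<bar>x - fst (c i)\<bar> < 1"
    by (auto simp: abs_le_iff abs_less_iff)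
qed

text \<open>At the breakpoint t (Suc i) the envelope passes from the arc of c i to that of
  c (Suc i), which is impossible unless c i lies to the left.\<close>
lemma piece_centres_consecutive_less:
  assumes decomp: "piece_decomp y0 A envelope n t c" and "Suc i < n"
  shows "fst (c i) < fst (c (Suc i))"
proof -
  define p where "p = (t i + t (Suc i)) / 2"
  define q where "q = (t (Suc i) + t (Suc (Suc i))) / 2"
  have "t i < t (Suc i)" "t (Suc i) < t (Suc (Suc i))" and "c i \<noteq> c (Suc i)"
    using assms by (auto simp: piece_decomp_def)
  then have p: "p \<in> {t i<..<t (Suc i)}" and q: "q \<in> {t (Suc i)<..<t (Suc (Suc i))}"
    by (auto simp: p_def q_def)
  have "i < n"
    using \<open>Suc i < n\<close> by simp
  note this_piece = piece_on_upper_arc[OF decomp \<open>i < n\<close>]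
    and next_piece = piece_on_upper_arc[OF decomp \<open>Suc i < n\<close>]
  show ?thesis
  proof (rule upper_arc_crossing_order[of _ _ p q])
    show "c i \<noteq> c (Suc i)" "p < q"
      using \<open>c i \<noteq> c (Suc i)\<close> p q by auto
    show "\<bar>p - fst (c i)\<bar> < 1" "\<bar>q - fst (c (Suc i))\<bar> < 1"
      using this_piece(3) next_piece(3) p q by auto
    have "envelope p = upper_arc (c i) p" "envelope q = upper_arc (c (Suc i)) q"
      using this_piece(2) next_piece(2) p q by auto
    then show "upper_arc (c (Suc i)) p \<le> upper_arc (c i) p" "upper_arc (c i) q \<le> upper_arc (c (Suc i)) q"
      using upper_arc_le_envelope[OF next_piece(1), of p] upper_arc_le_envelope[OF this_piece(1), of q]
      by simp_all
  qed
qed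

lemma piece_centres_less:
  assumes "piece_decomp y0 A envelope n t c" "i < j" "j < n"
  shows "fst (c i) < fst (c j)"
  by (rule lift_Suc_mono_less_ivl[where f = "\<lambda>k. fst (c k)" and N = "{k. Suc k < n}"])
    (use piece_centres_consecutive_less[OF assms(1)] assms(2,3) in auto)

lemma piece_decomp_envelope_properties:
  assumes decomp: "piece_decomp y0 A envelope n t c"
  shows "(\<forall>i<n. \<forall>j<n. i < j \<longleftrightarrow> fst (c i) < fst (c j)) \<and> inj_on c {..<n} \<and> n + 2 \<le> card A + 2"
proof -
  have order: "\<forall>i<n. \<forall>j<n. i < j \<longleftrightarrow> fst (c i) < fst (c j)"
  proof (intro allI impI)
    fix i j
    assume "i < n" "j < n"
    then show "i < j \<longleftrightarrow> fst (c i) < fst (c j)"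
      using piece_centres_less[OF decomp, of i j] piece_centres_less[OF decomp, of j i]
      by (cases i j rule: linorder_cases) auto
  qed
  have inj: "inj_on c {..<n}"
  proof (rule inj_onI)
    fix i j
    assume "i \<in> {..<n}" "j \<in> {..<n}" "c i = c j"
    then show "i = j"
      using piece_centres_less[OF decomp, of i j] piece_centres_less[OF decomp, of j i]
      by (cases i j rule: linorder_cases) auto
  qed
  have "c ` {..<n} \<subseteq> A"
    using decomp by (auto simp: piece_decomp_def)
  then have "card (c ` {..<n}) \<le> card A"
    by (rule card_mono[OF finite_centres])
  then have "n \<le> card A"
    by (simp add: card_image[OF inj])
  with order inj show ?thesis
    by simp
qed

end

theorem fact3:
  fixes x0 y0 :: real and A :: "(real \<times> real) set"
  assumes "finite A" and "A \<noteq> {}" and "A \<subseteq> square x0 y0"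
  shows "\<exists>f :: real \<Rightarrow> real.
           continuous_on UNIV f \<and>
           xi y0 A = {(x, f x) | x. True} \<and>
           (\<exists>n t c. piece_decomp y0 A f n t c) \<and>
           (\<forall>n t c. piece_decomp y0 A f n t c \<longrightarrow>
              (\<forall>i<n. \<forall>j<n. i < j \<longleftrightarrow> fst (c i) < fst (c j)) \<and>
              inj_on c {..<n} \<and>
              n + 2 \<le> card A + 2)"
proof -
  interpret unit_disks_in_square x0 y0 A
    using assms by unfold_locales
  show ?thesis
  proof (intro exI[of _ envelope] conjI allI impI)
    show "continuous_on UNIV envelope"
      by (rule continuous_on_envelope)
    show "xi y0 A = {(x, envelope x) | x. True}"
      by (rule xi_eq_graph_envelope)
    show "\<exists>n t c. piece_decomp y0 A envelope n t c"
      by (rule piece_decomp_exists_if_arc_decomp[OF arc_decomp_envelope])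
  qed (use piece_decomp_envelope_properties in blast)+
qed

end
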